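(* Let $\sigma\subseteq N_\mathbb{Q}$ be a strongly convex rational polyhedral cone, $\tau$ a $k$-dimensional regular face of $\sigma$ with primitive ray generators $p_1,\ldots,p_k$, and let $c_1,\ldots,c_k\in\tau^\perp\cap M$ be arbitrary. Then there is a set of Demazure roots $\{e_1^{(r)},e_2^{(r)}\mid r=1,\ldots,k\}$ of $\sigma$ compatible with $\tau$ such that $e_1^{(r)}-e_2^{(r)}=c_r$ for all $r=1,\ldots,k$.
   Context: $N$ is a lattice, $M$ its dual, $\langle\cdot,\cdot\rangle$ the pairing. A face is regular if its primitive ray generators are part of a basis of $N$. If $p_1,\ldots,p_m$ are the primitive vectors on the rays of $\sigma$, a Demazure root associated with $p_i$ is an $e\in M$ with $\langle p_i,e\rangle=-1$ and $\langle p_j,e\rangle\ge0$ for all $j\ne i$. A set $\{e_1^{(r)},e_2^{(r)}\}_{r=1}^k$ of Demazure roots of $\sigma$ is compatible with $\tau$ if $\langle p_s,e_1^{(r)}\rangle=\langle p_s,e_2^{(r)}\rangle=-\delta_{rs}$ for all $r,s=1,\ldots,k$. *)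

theory Defs
  imports "HOL-Analysis.Analysis"
begin

text \<open>The lattice N is modelled as int^'n (a lattice of rank CARD('n)), its dual M
  also as int^'n, with the standard pairing. N_Q is modelled inside real^'n.\<close>

definition rvec :: "int^'n \<Rightarrow> real^'n" where
  "rvec v = (\<chi> i. real_of_int (v $ i))"

definition pairing :: "int^'n \<Rightarrow> int^'n \<Rightarrow> int" where
  "pairing p e = (\<Sum>i\<in>UNIV. p $ i * e $ i)"

definition lattice_cone :: "(int^'n) set \<Rightarrow> (real^'n) set" where
  "lattice_cone S = {\<Sum>s\<in>S. a s *\<^sub>R rvec s | a. \<forall>s\<in>S. a s \<ge> 0}"

definition rational_polyhedral_cone :: "(real^'n) set \<Rightarrow> bool" where
  "rational_polyhedral_cone \<sigma> \<longleftrightarrow> (\<exists>S. finite S \<and> \<sigma> = lattice_cone S)"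

definition strongly_convex :: "(real^'n) set \<Rightarrow> bool" where
  "strongly_convex \<sigma> \<longleftrightarrow> (\<forall>x. x \<in> \<sigma> \<and> - x \<in> \<sigma> \<longrightarrow> x = 0)"

definition primitive_vec :: "int^'n \<Rightarrow> bool" where
  "primitive_vec v \<longleftrightarrow> v \<noteq> 0 \<and> (\<forall>(k::int) w. v = k *s w \<longrightarrow> \<bar>k\<bar> = 1)"

definition ray_gens :: "(real^'n) set \<Rightarrow> (int^'n) set" where
  "ray_gens \<sigma> = {p. primitive_vec p \<and> (\<exists>F. F face_of \<sigma> \<and> aff_dim F = 1 \<and> rvec p \<in> F)}"

definition lattice_basis :: "(int^'n) set \<Rightarrow> bool" where
  "lattice_basis B \<longleftrightarrow> finite B \<and> independent (rvec ` B) \<and> inj_on rvec B \<and>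
     (\<forall>v. \<exists>a::int^'n \<Rightarrow> int. v = (\<Sum>b\<in>B. a b *s b))"

definition regular_face :: "(real^'n) set \<Rightarrow> bool" where
  "regular_face \<tau> \<longleftrightarrow> (\<exists>B. lattice_basis B \<and> ray_gens \<tau> \<subseteq> B)"

definition perp_lattice :: "(real^'n) set \<Rightarrow> (int^'n) set" where
  "perp_lattice \<tau> = {c. \<forall>x\<in>\<tau>. x \<bullet> rvec c = 0}"

definition demazure_root :: "(real^'n) set \<Rightarrow> int^'n \<Rightarrow> int^'n \<Rightarrow> bool" where
  "demazure_root \<sigma> p e \<longleftrightarrow> p \<in> ray_gens \<sigma> \<and> pairing p e = -1 \<and>
     (\<forall>q\<in>ray_gens \<sigma>. q \<noteq> p \<longrightarrow> pairing q e \<ge> 0)"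

end

theory Submission
  imports Defs
begin

(* Since \<sigma> is polyhedral, the face \<tau> is exposed: \<tau> = \<sigma> \<inter> u\<^sup>\<bottom> with u \<ge> 0 on \<sigma>.
   Extend the ray generators of \<tau> to a lattice basis B with dual basis d. Rounding the
   coordinates of N u with respect to d gives a lattice point m \<in> \<tau>\<^sup>\<bottom> whose pairing with
   every generator of \<sigma> outside \<tau> is within a bounded distance of N times a positive
   number, so it is as large as we like. Then m - d r and m - d r - c r pair to -\<delta> with the
   ray generators of \<tau> and nonnegatively with the generators of \<sigma> outside \<tau>. A ray of \<sigma>
   outside \<tau> involves only generators outside \<tau> (a generator inside \<tau> contributing to it
   would put the whole ray into \<tau>), so both are Demazure roots. *)

lemma rvec_add: "rvec (a + b) = rvec a + rvec b"
  by (simp add: rvec_def vec_eq_iff)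

lemma rvec_smult: "rvec (k *s a) = of_int k *\<^sub>R rvec a"
  by (simp add: rvec_def vec_eq_iff)

lemma rvec_eq_0_iff: "rvec a = 0 \<longleftrightarrow> a = 0"
  by (simp add: rvec_def vec_eq_iff)

lemma rvec_sum: "rvec (\<Sum>b\<in>B. f b) = (\<Sum>b\<in>B. rvec (f b))"
  by (induction B rule: infinite_finite_induct) (auto simp: rvec_add rvec_def vec_eq_iff)

lemma rvec_lincomb: "rvec (\<Sum>b\<in>B. a b *s b) = (\<Sum>b\<in>B. of_int (a b) *\<^sub>R rvec b)"
  by (simp add: rvec_sum rvec_smult)

lemma inner_rvec: "rvec p \<bullet> rvec e = of_int (pairing p e)"
  by (simp add: inner_vec_def rvec_def pairing_def)

lemma pairing_diff_right: "pairing p (a - b) = pairing p a - pairing p b"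
  by (simp add: pairing_def algebra_simps sum_subtractf)

lemma pairing_lincomb_right: "pairing p (\<Sum>b\<in>B. a b *s f b) = (\<Sum>b\<in>B. a b * pairing p (f b))"
  by (simp add: pairing_def sum_component sum_distrib_left algebra_simps) (rule sum.swap)

lemma rvec_ray_gen_mem: "p \<in> ray_gens \<tau> \<Longrightarrow> rvec p \<in> \<tau>"
  unfolding ray_gens_def using face_of_imp_subset by blast

lemma pairing_eq_0_if_perp_lattice:
  assumes "p \<in> ray_gens \<tau>" and "c \<in> perp_lattice \<tau>"
  shows "pairing p c = 0"
  using rvec_ray_gen_mem[OF assms(1)] assms(2) inner_rvec[of p c] by (simp add: perp_lattice_def)

subsection \<open>Lattice bases and dual bases\<close>

lemma lattice_basis_coeffs_unique:
  fixes B :: "(int^'n) set"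
  assumes B: "lattice_basis B" and eq: "(\<Sum>b\<in>B. f b *s b) = (\<Sum>b\<in>B. g b *s b)" and b: "b \<in> B"
  shows "f b = g b"
proof -
  have fin: "finite B" and ind: "independent (rvec ` B)" and inj: "inj_on rvec B"
    using B by (auto simp: lattice_basis_def)
  define h :: "real^'n \<Rightarrow> real" where
    "h v = of_int (f (inv_into B rvec v) - g (inv_into B rvec v))" for v
  have "(\<Sum>v\<in>rvec ` B. h v *\<^sub>R v) = (\<Sum>b\<in>B. of_int (f b - g b) *\<^sub>R rvec b)"
    by (simp add: sum.reindex[OF inj] h_def inv_into_f_f[OF inj])
  also have "\<dots> = rvec (\<Sum>b\<in>B. f b *s b) - rvec (\<Sum>b\<in>B. g b *s b)"
    by (simp add: rvec_lincomb scaleR_diff_left sum_subtractf)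
  finally have "(\<Sum>v\<in>rvec ` B. h v *\<^sub>R v) = 0"
    using eq by simp
  then have "h (rvec b) = 0"
    using ind fin b by (auto simp: independent_explicit_finite_subsets)
  then show ?thesis
    by (simp add: h_def inv_into_f_f[OF inj b])
qed

lemma lattice_basis_dual_coords:
  assumes B: "lattice_basis B"
  obtains \<alpha> d where "\<And>v. v = (\<Sum>b\<in>B. \<alpha> v b *s b)"
    and "\<And>v b. b \<in> B \<Longrightarrow> pairing v (d b) = \<alpha> v b"
proof -
  obtain \<alpha> where \<alpha>: "\<And>v. v = (\<Sum>b\<in>B. \<alpha> v b *s b)"
    using B unfolding lattice_basis_def by metis
  define d where "d b = (\<chi> i. \<alpha> (axis i 1) b)" for b
  have "pairing v (d b) = \<alpha> v b" if "b \<in> B" for v b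
  proof (rule lattice_basis_coeffs_unique[OF B _ that])
    have "v = (\<Sum>i\<in>UNIV. v $ i *s (\<Sum>b\<in>B. \<alpha> (axis i 1) b *s b))"
      by (simp flip: \<alpha> add: basis_expansion)
    also have "\<dots> = (\<Sum>b\<in>B. pairing v (d b) *s b)"
      by (simp add: pairing_def d_def scaleR_sum_right sum_distrib_left sum_distrib_right
          vec_eq_iff sum_component mult.assoc) (intro allI sum.swap)
    finally show "(\<Sum>b\<in>B. pairing v (d b) *s b) = (\<Sum>b\<in>B. \<alpha> v b *s b)"
      using \<alpha> by simp
  qed
  with \<alpha> show thesis by (rule that)
qed

lemma lattice_basis_coords_of_basis_vector:
  assumes B: "lattice_basis B" and \<alpha>: "\<And>v. v = (\<Sum>b\<in>B. \<alpha> v b *s b)"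
    and "b \<in> B" and "b' \<in> B"
  shows "\<alpha> b' b = (if b' = b then 1 else 0)"
proof -
  have "finite B" using B by (simp add: lattice_basis_def)
  then have "(\<Sum>c\<in>B. \<alpha> b' c *s c) = (\<Sum>c\<in>B. (if c = b' then 1 else 0) *s c)"
    using \<alpha>[of b'] \<open>b' \<in> B\<close> by (simp add: if_distrib[where f="\<lambda>t. t *s _"] cong: if_cong)
  from lattice_basis_coeffs_unique[OF B this \<open>b \<in> B\<close>] show ?thesis
    by auto
qed

lemma lattice_basis_dual_basis:
  assumes B: "lattice_basis B"
  obtains d where "\<And>b b'. b \<in> B \<Longrightarrow> b' \<in> B \<Longrightarrow> pairing b' (d b) = (if b' = b then 1 else 0)"
proof -
  obtain \<alpha> d where \<alpha>: "\<And>v. v = (\<Sum>b\<in>B. \<alpha> v b *s b)"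
    and d: "\<And>v b. b \<in> B \<Longrightarrow> pairing v (d b) = \<alpha> v b"
    using lattice_basis_dual_coords[OF B] by metis
  show thesis
    by (rule that[of d]) (simp add: d lattice_basis_coords_of_basis_vector[OF B \<alpha>])
qed

subsection \<open>Lattice points approximating a real functional\<close>

lemma lattice_point_approximating_functional:
  fixes B P :: "(int^'n) set" and u :: "real^'n"
  assumes B: "lattice_basis B" and PB: "P \<subseteq> B" and u_P: "\<forall>p\<in>P. u \<bullet> rvec p = 0"
  obtains C where "\<And>N. \<exists>m. (\<forall>p\<in>P. pairing p m = 0) \<and>
    (\<forall>v. \<bar>of_int (pairing v m) - N * (u \<bullet> rvec v)\<bar> \<le> C v)"
proof -
  obtain \<alpha> d where \<alpha>: "\<And>v. v = (\<Sum>b\<in>B. \<alpha> v b *s b)"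
    and d: "\<And>v b. b \<in> B \<Longrightarrow> pairing v (d b) = \<alpha> v b"
    using lattice_basis_dual_coords[OF B] by metis
  have fin: "finite B" using B by (simp add: lattice_basis_def)
  define C where "C v = (\<Sum>b\<in>B. \<bar>real_of_int (\<alpha> v b)\<bar>)" for v
  have "\<exists>m. (\<forall>p\<in>P. pairing p m = 0) \<and> (\<forall>v. \<bar>of_int (pairing v m) - N * (u \<bullet> rvec v)\<bar> \<le> C v)"
    for N
  proof -
    define y where "y b = \<lfloor>N * (u \<bullet> rvec b)\<rfloor>" for b
    \<comment> \<open>the coordinates of N u with respect to the dual basis d are N u \<bullet> b, and vanish on P\<close>
    define m where "m = (\<Sum>b\<in>B - P. y b *s d b)"
    have pairing_m: "pairing v m = (\<Sum>b\<in>B - P. y b * \<alpha> v b)" for v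
      unfolding m_def pairing_lincomb_right by (rule sum.cong) (simp_all add: d)
    have "pairing p m = 0" if "p \<in> P" for p
      unfolding pairing_m using that PB lattice_basis_coords_of_basis_vector[OF B \<alpha>, of _ p]
      by (intro sum.neutral) (metis DiffE mult_zero_right subsetD)
    moreover have "\<bar>of_int (pairing v m) - N * (u \<bullet> rvec v)\<bar> \<le> C v" for v
    proof -
      have "N * (u \<bullet> rvec v) = (\<Sum>b\<in>B. of_int (\<alpha> v b) * (N * (u \<bullet> rvec b)))"
        by (subst \<alpha>) (simp add: rvec_lincomb inner_sum_right sum_distrib_left algebra_simps)
      also have "\<dots> = (\<Sum>b\<in>B - P. of_int (\<alpha> v b) * (N * (u \<bullet> rvec b)))"
        using fin u_P by (intro sum.mono_neutral_right) auto
      finally have "of_int (pairing v m) - N * (u \<bullet> rvec v)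
          = (\<Sum>b\<in>B - P. of_int (\<alpha> v b) * (of_int (y b) - N * (u \<bullet> rvec b)))"
        by (simp add: pairing_m algebra_simps sum_subtractf)
      also have "\<bar>\<dots>\<bar> \<le> (\<Sum>b\<in>B - P. \<bar>of_int (\<alpha> v b)\<bar>)"
      proof (rule order_trans[OF sum_abs sum_mono])
        fix b
        have "\<bar>of_int (y b) - N * (u \<bullet> rvec b)\<bar> \<le> 1"
          unfolding y_def by (smt (verit) of_int_floor_le real_of_int_floor_add_one_gt)
        then show "\<bar>of_int (\<alpha> v b) * (of_int (y b) - N * (u \<bullet> rvec b))\<bar> \<le> \<bar>of_int (\<alpha> v b)\<bar>"
          by (simp add: abs_mult mult_left_le)
      qed
      also have "\<dots> \<le> C v"
        unfolding C_def using fin by (intro sum_mono2) auto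
      finally show ?thesis .
    qed
    ultimately show ?thesis by blast
  qed
  then show thesis by (rule that)
qed

lemma lattice_point_dominating_on_positive_set:
  fixes B P T :: "(int^'n) set" and f :: "int^'n \<Rightarrow> int"
  assumes "lattice_basis B" and "P \<subseteq> B" and "\<forall>p\<in>P. u \<bullet> rvec p = 0"
    and fin: "finite T" and T_pos: "\<forall>s\<in>T. 0 < u \<bullet> rvec s"
  shows "\<exists>m. (\<forall>p\<in>P. pairing p m = 0) \<and> (\<forall>s\<in>T. f s \<le> pairing s m)"
proof -
  obtain C where C: "\<And>N. \<exists>m. (\<forall>p\<in>P. pairing p m = 0) \<and>
      (\<forall>v. \<bar>of_int (pairing v m) - N * (u \<bullet> rvec v)\<bar> \<le> C v)"
    using lattice_point_approximating_functional[OF assms(1-3)] by blast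
  define N where "N = (\<Sum>s\<in>T. (\<bar>of_int (f s)\<bar> + C s) / (u \<bullet> rvec s))"
  obtain m where m_P: "\<forall>p\<in>P. pairing p m = 0"
    and m_approx: "\<And>v. \<bar>of_int (pairing v m) - N * (u \<bullet> rvec v)\<bar> \<le> C v"
    using C[of N] by blast
  have C_nonneg: "0 \<le> C v" for v
    using m_approx[of v] by linarith
  have "f s \<le> pairing s m" if s: "s \<in> T" for s
  proof -
    have pos: "0 < u \<bullet> rvec s" using T_pos s by blast
    have "(\<bar>of_int (f s)\<bar> + C s) / (u \<bullet> rvec s) \<le> N"
      unfolding N_def using fin s T_pos C_nonneg
      by (intro member_le_sum) (auto intro!: divide_nonneg_pos add_nonneg_nonneg)
    then have "\<bar>of_int (f s)\<bar> + C s \<le> N * (u \<bullet> rvec s)"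
      using pos by (simp add: divide_le_eq)
    then show ?thesis
      using m_approx[of s] by linarith
  qed
  with m_P show ?thesis by blast
qed

subsection \<open>Faces of convex cones\<close>

lemma zero_in_face_of_convex_cone:
  assumes "convex_cone C" and "F face_of C" and "F \<noteq> {}"
  shows "0 \<in> F"
  using assms face_of_conic conic_contains_0 by (auto simp: convex_cone_def)

lemma face_of_convex_cone_summand:
  fixes C :: "'a::euclidean_space set"
  assumes cc: "convex_cone C" and F: "F face_of C" and y: "y \<in> C" and z: "z \<in> C"
    and yz: "y + z \<in> F"
  shows "y \<in> F"
proof -
  have "0 \<in> F"
    using zero_in_face_of_convex_cone[OF cc F] yz by blast
  then have "(1/2) *\<^sub>R 0 + (1/2) *\<^sub>R (y + z) \<in> F"
    using convexD[OF face_of_imp_convex[OF F] \<open>0 \<in> F\<close> yz, of "1/2" "1/2"] by simp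
  then have m: "midpoint y z \<in> F"
    by (simp add: midpoint_def)
  show ?thesis
  proof (cases "y = z")
    case True
    then show ?thesis using m by simp
  next
    case False
    then show ?thesis using face_ofD[OF F _ y z m] by simp
  qed
qed

lemma ray_subset_face:
  fixes C :: "'a::euclidean_space set"
  assumes cc: "convex_cone C" and F: "F face_of C" "aff_dim F = 1" and T: "T face_of C"
    and y: "y \<in> F" "y \<in> T" "y \<noteq> 0"
  shows "F \<subseteq> T"
proof (rule ccontr)
  assume "\<not> F \<subseteq> T"
  then have "F \<inter> T \<noteq> F" by blast
  moreover have FT: "F \<inter> T face_of F"
    using face_of_Int[OF F(1) T] F(1) face_of_subset face_of_imp_subset by blast
  ultimately have "aff_dim (F \<inter> T) < 1"
    using face_of_aff_dim_lt[OF face_of_imp_convex[OF F(1)]] F(2) by metis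
  moreover have "0 \<in> F \<inter> T"
    using zero_in_face_of_convex_cone[OF cc face_of_Int[OF F(1) T]] y by blast
  then have "aff_dim {0, y} \<le> aff_dim (F \<inter> T)"
    using y by (intro aff_dim_subset) auto
  ultimately show False
    using y by simp
qed

subsection \<open>Cones generated by lattice vectors\<close>

lemma convex_cone_sum:
  assumes "convex_cone C" and "\<And>s. s \<in> S \<Longrightarrow> f s \<in> C"
  shows "sum f S \<in> C"
  using assms(2)
  by (induction S rule: infinite_finite_induct)
     (use assms(1) in \<open>auto simp: convex_cone_contains_0 convex_cone_add\<close>)

lemma convex_cone_lattice_cone: "convex_cone (lattice_cone S)"
  unfolding convex_cone_iff
proof (intro conjI ballI allI impI)
  show "0 \<in> lattice_cone S"
    unfolding lattice_cone_def by (rule CollectI, rule exI[of _ "\<lambda>_. 0"]) simp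
next
  fix x y assume "x \<in> lattice_cone S" "y \<in> lattice_cone S"
  then obtain a b where "x = (\<Sum>s\<in>S. a s *\<^sub>R rvec s)" "\<forall>s\<in>S. a s \<ge> 0"
    and "y = (\<Sum>s\<in>S. b s *\<^sub>R rvec s)" "\<forall>s\<in>S. b s \<ge> 0"
    by (auto simp: lattice_cone_def)
  then show "x + y \<in> lattice_cone S"
    unfolding lattice_cone_def
    by (intro CollectI exI[of _ "\<lambda>s. a s + b s"]) (auto simp: scaleR_add_left sum.distrib)
next
  fix x and c :: real assume "x \<in> lattice_cone S" "0 \<le> c"
  then obtain a where "x = (\<Sum>s\<in>S. a s *\<^sub>R rvec s)" "\<forall>s\<in>S. a s \<ge> 0"
    by (auto simp: lattice_cone_def)
  with \<open>0 \<le> c\<close> show "c *\<^sub>R x \<in> lattice_cone S"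
    unfolding lattice_cone_def
    by (intro CollectI exI[of _ "\<lambda>s. c * a s"]) (auto simp: scaleR_sum_right)
qed

lemma rvec_in_lattice_cone:
  assumes "finite S" and "s \<in> S"
  shows "rvec s \<in> lattice_cone S"
  unfolding lattice_cone_def
  by (intro CollectI exI[of _ "\<lambda>t. if t = s then 1 else 0"])
     (use assms in \<open>simp add: if_distrib[where f="\<lambda>t. t *\<^sub>R _"] cong: if_cong\<close>)

lemma lattice_cone_eq_convex_cone_hull:
  assumes fin: "finite S"
  shows "lattice_cone S = convex_cone hull (rvec ` S)"
proof
  show "convex_cone hull (rvec ` S) \<subseteq> lattice_cone S"
    by (rule hull_minimal) (use rvec_in_lattice_cone[OF fin] convex_cone_lattice_cone in auto)
next
  show "lattice_cone S \<subseteq> convex_cone hull (rvec ` S)"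
    unfolding lattice_cone_def
    by (clarify, rule convex_cone_sum[OF convex_cone_convex_cone_hull])
       (simp add: convex_cone_hull_mul hull_inc)
qed

lemma face_of_lattice_cone_exposed:
  assumes fin: "finite S" and T: "\<tau> face_of lattice_cone S" and ne: "\<tau> \<noteq> {}"
  obtains u where "\<forall>x\<in>lattice_cone S. 0 \<le> u \<bullet> x" and "\<tau> = {x\<in>lattice_cone S. u \<bullet> x = 0}"
proof -
  have "polyhedron (lattice_cone S)"
    unfolding lattice_cone_eq_convex_cone_hull[OF fin]
    by (rule polyhedron_convex_cone_hull) (simp add: fin)
  then have "\<tau> exposed_face_of lattice_cone S"
    using exposed_face_of_polyhedron T by blast
  then obtain a b where ab: "lattice_cone S \<subseteq> {x. a \<bullet> x \<le> b}"
    "\<tau> = lattice_cone S \<inter> {x. a \<bullet> x = b}"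
    by (auto simp: exposed_face_of_def)
  have "0 \<in> \<tau>"
    using zero_in_face_of_convex_cone[OF convex_cone_lattice_cone T ne] .
  then have "b = 0"
    using ab by auto
  then show thesis
    using ab by (intro that[of "-a"]) auto
qed

subsection \<open>Rays and Demazure roots\<close>

lemma ray_gens_face_subset: "\<tau> face_of \<sigma> \<Longrightarrow> ray_gens \<tau> \<subseteq> ray_gens \<sigma>"
  unfolding ray_gens_def using face_of_trans by blast

lemma ray_gen_of_face:
  assumes cc: "convex_cone \<sigma>" and T: "\<tau> face_of \<sigma>" and q: "q \<in> ray_gens \<sigma>" and "rvec q \<in> \<tau>"
  shows "q \<in> ray_gens \<tau>"
proof -
  obtain F where F: "F face_of \<sigma>" "aff_dim F = 1" "rvec q \<in> F" and q_prim: "primitive_vec q"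
    using q by (auto simp: ray_gens_def)
  have "rvec q \<noteq> 0"
    using q_prim by (simp add: primitive_vec_def rvec_eq_0_iff)
  then have "F \<subseteq> \<tau>"
    using ray_subset_face[OF cc F(1,2) T F(3) \<open>rvec q \<in> \<tau>\<close>] by blast
  then have "F face_of \<tau>"
    using face_of_subset[OF F(1)] T face_of_imp_subset by blast
  then show ?thesis
    using F q_prim by (auto simp: ray_gens_def)
qed

lemma pairing_ray_gen_nonneg:
  fixes S :: "(int^'n) set"
  assumes fin: "finite S" and T: "\<tau> face_of lattice_cone S"
    and u_nonneg: "\<forall>x\<in>lattice_cone S. 0 \<le> u \<bullet> x" and \<tau>: "\<tau> = {x\<in>lattice_cone S. u \<bullet> x = 0}"
    and e_nonneg: "\<forall>s\<in>S. 0 < u \<bullet> rvec s \<longrightarrow> 0 \<le> pairing s e"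
    and q: "q \<in> ray_gens (lattice_cone S)" and q_out: "rvec q \<notin> \<tau>"
  shows "0 \<le> pairing q e"
proof -
  let ?\<sigma> = "lattice_cone S"
  have cc: "convex_cone ?\<sigma>"
    by (rule convex_cone_lattice_cone)
  obtain F where F: "F face_of ?\<sigma>" "aff_dim F = 1" "rvec q \<in> F"
    using q by (auto simp: ray_gens_def)
  then have "rvec q \<in> ?\<sigma>"
    using face_of_imp_subset by blast
  then obtain a where a: "rvec q = (\<Sum>s\<in>S. a s *\<^sub>R rvec s)" "\<forall>s\<in>S. a s \<ge> 0"
    by (auto simp: lattice_cone_def)
  have "0 \<le> a s * of_int (pairing s e)" if s: "s \<in> S" for s
  proof (cases "0 < u \<bullet> rvec s")
    case True
    then show ?thesis using e_nonneg s a(2) by simp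
  next
    case False
    have s_in: "rvec s \<in> ?\<sigma>"
      using rvec_in_lattice_cone[OF fin s] .
    define y where "y = a s *\<^sub>R rvec s"
    define z where "z = (\<Sum>t\<in>S - {s}. a t *\<^sub>R rvec t)"
    have y_in: "y \<in> ?\<sigma>"
      using s_in a(2) s cc by (simp add: y_def convex_cone_scaleR)
    have z_in: "z \<in> ?\<sigma>"
      unfolding z_def using a(2) fin
      by (intro convex_cone_sum[OF cc]) (simp add: convex_cone_scaleR[OF cc] rvec_in_lattice_cone)
    have "y + z = rvec q"
      unfolding y_def z_def a(1) using sum.remove[OF fin s, of "\<lambda>t. a t *\<^sub>R rvec t"] by simp
    then have "y \<in> F"
      using face_of_convex_cone_summand[OF cc F(1) y_in z_in] F(3) by simp
    moreover have "u \<bullet> y = 0"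
      using False u_nonneg s_in by (force simp: y_def)
    then have "y \<in> \<tau>"
      using y_in by (simp add: \<tau>)
    ultimately have "y = 0"
      using ray_subset_face[OF cc F(1,2) T] F(3) q_out by blast
    then show ?thesis
      using rvec_eq_0_iff[of s] by (auto simp: y_def pairing_def)
  qed
  then have "0 \<le> (\<Sum>s\<in>S. a s * of_int (pairing s e))"
    by (rule sum_nonneg)
  also have "\<dots> = rvec q \<bullet> rvec e"
    by (simp add: a(1) inner_sum_left inner_rvec)
  finally show ?thesis
    by (simp add: inner_rvec)
qed

lemma demazure_root_of_exposed_face:
  fixes S :: "(int^'n) set"
  assumes fin: "finite S" and T: "\<tau> face_of lattice_cone S"
    and u_nonneg: "\<forall>x\<in>lattice_cone S. 0 \<le> u \<bullet> x" and \<tau>: "\<tau> = {x\<in>lattice_cone S. u \<bullet> x = 0}"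
    and r: "r \<in> ray_gens \<tau>" and e_face: "\<forall>p\<in>ray_gens \<tau>. pairing p e = (if p = r then -1 else 0)"
    and e_nonneg: "\<forall>s\<in>S. 0 < u \<bullet> rvec s \<longrightarrow> 0 \<le> pairing s e"
  shows "demazure_root (lattice_cone S) r e"
  unfolding demazure_root_def
proof (intro conjI ballI impI)
  show "r \<in> ray_gens (lattice_cone S)"
    using ray_gens_face_subset[OF T] r by blast
  show "pairing r e = -1"
    using e_face r by simp
  fix q assume q: "q \<in> ray_gens (lattice_cone S)" and "q \<noteq> r"
  show "0 \<le> pairing q e"
  proof (cases "rvec q \<in> \<tau>")
    case True
    then show ?thesis
      using e_face \<open>q \<noteq> r\<close> ray_gen_of_face[OF convex_cone_lattice_cone T q] by simp
  next
    case False
    then show ?thesis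
      using pairing_ray_gen_nonneg[OF fin T u_nonneg \<tau> e_nonneg q] by simp
  qed
qed

lemma compatible_demazure_roots_of_exposed_face:
  fixes S B :: "(int^'n) set"
  assumes fin: "finite S" and T: "\<tau> face_of lattice_cone S"
    and u_nonneg: "\<forall>x\<in>lattice_cone S. 0 \<le> u \<bullet> x" and \<tau>: "\<tau> = {x\<in>lattice_cone S. u \<bullet> x = 0}"
    and B: "lattice_basis B" and PB: "ray_gens \<tau> \<subseteq> B"
    and d: "\<And>b b'. b \<in> B \<Longrightarrow> b' \<in> B \<Longrightarrow> pairing b' (d b) = (if b' = b then 1 else 0)"
    and r: "r \<in> ray_gens \<tau>" and c: "c \<in> perp_lattice \<tau>"
  obtains m where "demazure_root (lattice_cone S) r (m - d r)"
    and "demazure_root (lattice_cone S) r (m - d r - c)"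
    and "\<forall>s\<in>ray_gens \<tau>. pairing s (m - d r) = (if s = r then -1 else 0) \<and>
      pairing s (m - d r - c) = (if s = r then -1 else 0)"
proof -
  have u_P: "\<forall>p\<in>ray_gens \<tau>. u \<bullet> rvec p = 0"
    using \<tau> rvec_ray_gen_mem by auto
  have "\<exists>m. (\<forall>p\<in>ray_gens \<tau>. pairing p m = 0) \<and>
      (\<forall>s\<in>{s\<in>S. 0 < u \<bullet> rvec s}. \<bar>pairing s (d r)\<bar> + \<bar>pairing s c\<bar> \<le> pairing s m)"
    by (rule lattice_point_dominating_on_positive_set[OF B PB u_P]) (use fin in auto)
  then obtain m where m_P: "\<forall>p\<in>ray_gens \<tau>. pairing p m = 0"
    and m_dominates: "\<forall>s\<in>{s\<in>S. 0 < u \<bullet> rvec s}. \<bar>pairing s (d r)\<bar> + \<bar>pairing s c\<bar> \<le> pairing s m"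
    by blast
  have compat: "pairing s (m - d r) = (if s = r then -1 else 0) \<and>
      pairing s (m - d r - c) = (if s = r then -1 else 0)" if "s \<in> ray_gens \<tau>" for s
    using that r m_P d[of r s] pairing_eq_0_if_perp_lattice[OF that c] PB[THEN subsetD]
    by (auto simp: pairing_diff_right)
  have nonneg: "0 \<le> pairing s (m - d r) \<and> 0 \<le> pairing s (m - d r - c)"
    if "s \<in> S" "0 < u \<bullet> rvec s" for s
    using m_dominates that unfolding pairing_diff_right by fastforce
  show thesis
    using compat nonneg
    by (intro that) (auto intro!: demazure_root_of_exposed_face[OF fin T u_nonneg \<tau> r])
qed

theorem mainTheorem4:
  fixes \<sigma> \<tau> :: "(real^'n) set" and k :: nat and c :: "int^'n \<Rightarrow> int^'n"
  assumes "rational_polyhedral_cone \<sigma>" and "strongly_convex \<sigma>"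
    and "\<tau> face_of \<sigma>" and "aff_dim \<tau> = int k" and "regular_face \<tau>"
    and "\<forall>p\<in>ray_gens \<tau>. c p \<in> perp_lattice \<tau>"
  shows "\<exists>e1 e2 :: int^'n \<Rightarrow> int^'n.
    (\<forall>r\<in>ray_gens \<tau>. demazure_root \<sigma> r (e1 r) \<and> demazure_root \<sigma> r (e2 r)
        \<and> e1 r - e2 r = c r) \<and>
    (\<forall>r\<in>ray_gens \<tau>. \<forall>s\<in>ray_gens \<tau>.
        pairing s (e1 r) = (if s = r then -1 else 0) \<and>
        pairing s (e2 r) = (if s = r then -1 else 0))"
proof -
  obtain S where fin: "finite S" and \<sigma>: "\<sigma> = lattice_cone S"
    using assms(1) by (auto simp: rational_polyhedral_cone_def)
  have T: "\<tau> face_of lattice_cone S"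
    using assms(3) \<sigma> by simp
  have "\<tau> \<noteq> {}"
    using assms(4) by (intro notI) simp
  then obtain u where u_nonneg: "\<forall>x\<in>lattice_cone S. 0 \<le> u \<bullet> x"
    and \<tau>: "\<tau> = {x\<in>lattice_cone S. u \<bullet> x = 0}"
    by (rule face_of_lattice_cone_exposed[OF fin T])
  obtain B where B: "lattice_basis B" and PB: "ray_gens \<tau> \<subseteq> B"
    using assms(5) by (auto simp: regular_face_def)
  obtain d where d: "\<And>b b'. b \<in> B \<Longrightarrow> b' \<in> B \<Longrightarrow> pairing b' (d b) = (if b' = b then 1 else 0)"
    using lattice_basis_dual_basis[OF B] by blast
  have "\<forall>r. \<exists>m. r \<in> ray_gens \<tau> \<longrightarrow>
      demazure_root \<sigma> r (m - d r) \<and> demazure_root \<sigma> r (m - d r - c r) \<and>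
      (\<forall>s\<in>ray_gens \<tau>. pairing s (m - d r) = (if s = r then -1 else 0) \<and>
        pairing s (m - d r - c r) = (if s = r then -1 else 0))"
    unfolding \<sigma>
    using compatible_demazure_roots_of_exposed_face[OF fin T u_nonneg \<tau> B PB d] assms(6) by metis
  then obtain m where "\<forall>r\<in>ray_gens \<tau>.
      demazure_root \<sigma> r (m r - d r) \<and> demazure_root \<sigma> r (m r - d r - c r) \<and>
      (\<forall>s\<in>ray_gens \<tau>. pairing s (m r - d r) = (if s = r then -1 else 0) \<and>
        pairing s (m r - d r - c r) = (if s = r then -1 else 0))"
    by metis
  then show ?thesis
    by (intro exI[of _ "\<lambda>r. m r - d r"] exI[of _ "\<lambda>r. m r - d r - c r"]) simp
qed

end
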